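(* Let $\{\mathbb{G}_n,\ n=2,3,\ldots\}$ be a sequence of random graphs as described in the context, with $\lim_{n\to\infty}|V_n|=\infty$, satisfying: (A) for each $n$, $D_{n,k}$ has the same distribution as $D_{n,1}$ for all $k\in V_n$, and for all distinct $k,\ell\in V_n$, $(D_{n,k},D_{n,\ell})$ has the same joint distribution as $(D_{n,1},D_{n,2})$; (B) there is an $\mathbb{N}$-valued random variable $D$ with pmf $p=(p(d),\ d=0,1,\ldots)$ such that $D_{n,1}\to D$ in distribution; (C) for each $d=0,1,\ldots$, $\lim_{n\to\infty}\mathrm{Cov}\big[\mathbf{1}[D_{n,1}=d],\mathbf{1}[D_{n,2}=d]\big]=0$. Then $d_{\mathrm{TV}}(P_n,p)\to 0$ in probability as $n\to\infty$.
   Context: All random variables are defined on a common probability space $(\Omega,\mathcal{F},\mathbb{P})$. For each $n=2,3,\ldots$, $\mathbb{G}_n$ is a random (possibly directed, self-loops allowed) graph on the deterministic finite node set $V_n=\{1,\ldots,k_n\}$ with $k_n\ge 2$, determined by $\{0,1\}$-valued edge random variables $\{\chi_n(k,\ell),\ k,\ell\in V_n\}$. The degree of node $k$ is $D_{n,k}=\sum_{\ell\in V_n}\chi_n(k,\ell)$. For $d=0,1,\ldots$, $P_n(d)=\frac{1}{|V_n|}\sum_{k\in V_n}\mathbf{1}[D_{n,k}=d]$, and $P_n=(P_n(d),\ d=0,1,\ldots)$ is the (random) empirical degree pmf on $\mathbb{N}=\{0,1,\ldots\}$. For pmfs $\mu,\nu$ on $\mathbb{N}$, $d_{\mathrm{TV}}(\mu,\nu)=\frac12\sum_{x=0}^\infty|\mu(x)-\nu(x)|$.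 *)

theory Defs
  imports "HOL-Probability.Probability"
begin

definition degree :: "(nat \<Rightarrow> nat) \<Rightarrow> (nat \<Rightarrow> nat \<Rightarrow> nat \<Rightarrow> 'a \<Rightarrow> bool) \<Rightarrow> nat \<Rightarrow> nat \<Rightarrow> 'a \<Rightarrow> nat" where
  "degree kn X n k \<omega> = card {l \<in> {1..kn n}. X n k l \<omega>}"

definition emp_pmf :: "(nat \<Rightarrow> nat) \<Rightarrow> (nat \<Rightarrow> nat \<Rightarrow> nat \<Rightarrow> 'a \<Rightarrow> bool) \<Rightarrow> nat \<Rightarrow> 'a \<Rightarrow> nat \<Rightarrow> real" where
  "emp_pmf kn X n \<omega> d = real (card {k \<in> {1..kn n}. degree kn X n k \<omega> = d}) / real (kn n)"

definition dTV :: "(nat \<Rightarrow> real) \<Rightarrow> (nat \<Rightarrow> real) \<Rightarrow> real" where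
  "dTV \<mu> \<nu> = (1/2) * (\<Sum>x. \<bar>\<mu> x - \<nu> x\<bar>)"

definition covariance :: "'a measure \<Rightarrow> ('a \<Rightarrow> real) \<Rightarrow> ('a \<Rightarrow> real) \<Rightarrow> real" where
  "covariance M X Y = (\<integral>\<omega>. (X \<omega> - (\<integral>x. X x \<partial>M)) * (Y \<omega> - (\<integral>x. Y x \<partial>M)) \<partial>M)"

end

theory Submission
  imports Defs
begin

(*
  For each degree d, the empirical frequency P_n(d) is the average of the indicators
  1[D_{n,k} = d] over the k_n nodes. By exchangeability (A) its variance is at most
  1/k_n plus the covariance in (C), so Chebyshev's inequality makes it concentrate around
  its mean P[D_{n,1} = d], which tends to p(d) by (B). Since P_n and p are both
  probability vectors, their total variation distance is controlled by the first N
  coordinates plus the tail mass of p beyond N, and a union bound over these N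
  coordinates gives convergence in probability.
*)

lemma suminf_abs_diff_le_initial_segment:
  fixes a b :: "nat \<Rightarrow> real"
  assumes a: "a sums 1" and b: "b sums 1" and a0: "\<And>d. a d \<ge> 0" and b0: "\<And>d. b d \<ge> 0"
  shows "(\<Sum>d. \<bar>a d - b d\<bar>) \<le> 2 * (\<Sum>d<N. \<bar>a d - b d\<bar>) + 2 * (1 - (\<Sum>d<N. b d))"
proof -
  have sa: "summable a" and sb: "summable b" using a b by (auto simp: sums_iff)
  have sab: "summable (\<lambda>d. \<bar>a d - b d\<bar>)"
    by (rule summable_comparison_test[where g="\<lambda>d. a d + b d"])
       (use a0 b0 sa sb in \<open>auto intro!: summable_add exI[of _ 0] simp: abs_le_iff\<close>)
  have tail_a: "(\<Sum>j. a (j + N)) = 1 - (\<Sum>d<N. a d)"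
    using suminf_split_initial_segment[OF sa, of N] a by (simp add: sums_iff)
  have tail_b: "(\<Sum>j. b (j + N)) = 1 - (\<Sum>d<N. b d)"
    using suminf_split_initial_segment[OF sb, of N] b by (simp add: sums_iff)
  have "(\<Sum>j. \<bar>a (j + N) - b (j + N)\<bar>) \<le> (\<Sum>j. a (j + N) + b (j + N))"
    by (intro suminf_le summable_ignore_initial_segment sab summable_add sa sb)
       (use a0 b0 in \<open>auto simp: abs_le_iff\<close>)
  also have "\<dots> = (1 - (\<Sum>d<N. a d)) + (1 - (\<Sum>d<N. b d))"
    by (simp add: suminf_add[symmetric] summable_ignore_initial_segment sa sb tail_a tail_b)
  finally have tail: "(\<Sum>j. \<bar>a (j + N) - b (j + N)\<bar>) \<le> (1 - (\<Sum>d<N. a d)) + (1 - (\<Sum>d<N. b d))" .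
  have "(\<Sum>d<N. b d) - (\<Sum>d<N. a d) \<le> (\<Sum>d<N. \<bar>a d - b d\<bar>)"
    unfolding sum_subtractf[symmetric] by (intro sum_mono) auto
  then show ?thesis
    using suminf_split_initial_segment[OF sab, of N] tail by argo
qed

context prob_space
begin

lemma prob_eq_sums_1:
  fixes D :: "'a \<Rightarrow> nat"
  assumes [measurable]: "D \<in> measurable M (count_space UNIV)"
  shows "(\<lambda>d. prob {\<omega>\<in>space M. D \<omega> = d}) sums 1"
proof -
  have "(\<lambda>d. prob {\<omega>\<in>space M. D \<omega> = d}) sums prob (\<Union>d. {\<omega>\<in>space M. D \<omega> = d})"
    by (rule finite_measure_UNION) (auto simp: disjoint_family_on_def)
  moreover have "(\<Union>d. {\<omega>\<in>space M. D \<omega> = d}) = space M" by auto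
  ultimately show ?thesis by (simp add: prob_space)
qed

lemma integral_eq_if_distr_eq:
  assumes "distr M (count_space UNIV) F = distr M (count_space UNIV) G"
    and "F \<in> measurable M (count_space UNIV)" "G \<in> measurable M (count_space UNIV)"
  shows "expectation (\<lambda>\<omega>. h (F \<omega>) :: real) = expectation (\<lambda>\<omega>. h (G \<omega>))"
proof -
  have "expectation (\<lambda>\<omega>. h (F \<omega>)) = integral\<^sup>L (distr M (count_space UNIV) F) h"
    by (rule integral_distr[symmetric]) (use assms in auto)
  also have "\<dots> = integral\<^sup>L (distr M (count_space UNIV) G) h" using assms(1) by simp
  also have "\<dots> = expectation (\<lambda>\<omega>. h (G \<omega>))"
    by (rule integral_distr) (use assms in auto)
  finally show ?thesis .
qed

lemma cdf_distr_real_of_nat: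
  fixes f :: "'a \<Rightarrow> nat"
  assumes f: "f \<in> measurable M (count_space UNIV)" and y: "real d - 1 < y" "y < real d"
  shows "cdf (distr M borel (\<lambda>\<omega>. real (f \<omega>))) y = prob {\<omega>\<in>space M. f \<omega> < d}"
proof -
  have fm: "(\<lambda>\<omega>. real (f \<omega>)) \<in> borel_measurable M"
    using f by (rule measurable_compose) simp
  have "real m \<le> y \<longleftrightarrow> m < d" for m :: nat
  proof
    assume "real m \<le> y"
    then show "m < d" using y by simp
  next
    assume "m < d"
    then have "real m + 1 \<le> real d" by linarith
    then show "real m \<le> y" using y by simp
  qed
  then have "(\<lambda>\<omega>. real (f \<omega>)) -` {..y} \<inter> space M = {\<omega>\<in>space M. f \<omega> < d}" by auto
  then show ?thesis unfolding cdf_def2 by (simp add: measure_distr[OF fm])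
qed

lemma prob_eq_tendsto_if_weak_conv:
  fixes f :: "nat \<Rightarrow> 'a \<Rightarrow> nat" and g :: "'a \<Rightarrow> nat"
  assumes f: "\<And>n. f n \<in> measurable M (count_space UNIV)" and g: "g \<in> measurable M (count_space UNIV)"
    and conv: "weak_conv_m (\<lambda>n. distr M borel (\<lambda>\<omega>. real (f n \<omega>))) (distr M borel (\<lambda>\<omega>. real (g \<omega>)))"
  shows "(\<lambda>n. prob {\<omega>\<in>space M. f n \<omega> = d}) \<longlonglongrightarrow> prob {\<omega>\<in>space M. g \<omega> = d}"
proof -
  have less: "(\<lambda>n. prob {\<omega>\<in>space M. f n \<omega> < e}) \<longlonglongrightarrow> prob {\<omega>\<in>space M. g \<omega> < e}" for e
  proof -
    let ?F = "cdf (distr M borel (\<lambda>\<omega>. real (g \<omega>)))"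
    have mid: "real e - 1 < real e - 1/2" "real e - 1/2 < real e" by simp_all
    have "\<forall>\<^sub>F y in at (real e - 1/2). ?F y = ?F (real e - 1/2)"
      unfolding eventually_at
    proof (intro exI[of _ "1/2"] conjI ballI impI)
      fix y :: real assume "y \<noteq> real e - 1/2 \<and> dist y (real e - 1/2) < 1/2"
      then have "real e - 1 < y" "y < real e" by (auto simp: dist_real_def abs_less_iff field_simps)
      then show "?F y = ?F (real e - 1/2)"
        by (simp add: cdf_distr_real_of_nat[OF g] cdf_distr_real_of_nat[OF g mid])
    qed simp
    then have "isCont ?F (real e - 1/2)"
      unfolding isCont_def by (rule tendsto_eventually)
    then have "(\<lambda>n. cdf (distr M borel (\<lambda>\<omega>. real (f n \<omega>))) (real e - 1/2)) \<longlonglongrightarrow> ?F (real e - 1/2)"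
      using conv unfolding weak_conv_m_def weak_conv_def by blast
    then show ?thesis by (simp add: cdf_distr_real_of_nat[OF f mid] cdf_distr_real_of_nat[OF g mid])
  qed
  have split: "prob {\<omega>\<in>space M. h \<omega> = d} = prob {\<omega>\<in>space M. h \<omega> < Suc d} - prob {\<omega>\<in>space M. h \<omega> < d}"
    if [measurable]: "h \<in> measurable M (count_space UNIV)" for h :: "'a \<Rightarrow> nat"
  proof -
    have "{\<omega>\<in>space M. h \<omega> = d} = {\<omega>\<in>space M. h \<omega> < Suc d} - {\<omega>\<in>space M. h \<omega> < d}" by auto
    then show ?thesis by (simp add: finite_measure_Diff subset_eq)
  qed
  show ?thesis unfolding split[OF f] split[OF g] by (intro tendsto_diff less)
qed

lemma expectation_square_mean_le:
  fixes Z :: "nat \<Rightarrow> 'a \<Rightarrow> real" and A :: "nat set"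
  assumes A: "finite A" "A \<noteq> {}"
    and meas: "\<And>k. k \<in> A \<Longrightarrow> Z k \<in> borel_measurable M"
    and bounded: "\<And>k \<omega>. k \<in> A \<Longrightarrow> \<omega> \<in> space M \<Longrightarrow> \<bar>Z k \<omega>\<bar> \<le> 1"
    and off_diag: "\<And>k l. k \<in> A \<Longrightarrow> l \<in> A \<Longrightarrow> k \<noteq> l \<Longrightarrow> expectation (\<lambda>\<omega>. Z k \<omega> * Z l \<omega>) = c"
  shows "expectation (\<lambda>\<omega>. ((\<Sum>k\<in>A. Z k \<omega>) / card A)^2) \<le> 1 / card A + \<bar>c\<bar>"
proof -
  define K where "K = real (card A)"
  have K: "K > 0" using A unfolding K_def by (simp add: card_gt_0_iff)
  have prod_bounded: "\<bar>Z k \<omega> * Z l \<omega>\<bar> \<le> 1" if "k \<in> A" "l \<in> A" "\<omega> \<in> space M" for k l \<omega>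
    using bounded[OF that(1,3)] bounded[OF that(2,3)] by (simp add: abs_mult mult_le_one)
  have int: "integrable M (\<lambda>\<omega>. Z k \<omega> * Z l \<omega>)" if "k \<in> A" "l \<in> A" for k l
    by (rule integrable_const_bound[where B=1]) (use that meas prod_bounded in auto)
  have entry: "expectation (\<lambda>\<omega>. Z k \<omega> * Z l \<omega>) \<le> (if k = l then 1 else 0) + \<bar>c\<bar>"
    if "k \<in> A" "l \<in> A" for k l
  proof (cases "k = l")
    case True
    have "expectation (\<lambda>\<omega>. Z k \<omega> * Z l \<omega>) \<le> 1"
      by (rule integral_le_const[OF int[OF that]]) (use prod_bounded that in \<open>auto simp: abs_le_iff\<close>)
    then show ?thesis using True by simp
  qed (use off_diag that in simp)
  have "expectation (\<lambda>\<omega>. ((\<Sum>k\<in>A. Z k \<omega>) / card A)^2)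
      = (\<Sum>k\<in>A. \<Sum>l\<in>A. expectation (\<lambda>\<omega>. Z k \<omega> * Z l \<omega>)) / K^2"
    by (simp add: K_def power_divide power2_eq_square sum_product int integrable_sum
        Bochner_Integration.integral_sum)
  also have "\<dots> \<le> (\<Sum>k\<in>A. \<Sum>l\<in>A. (if k = l then 1 else 0) + \<bar>c\<bar>) / K^2"
    by (intro divide_right_mono sum_mono entry) auto
  also have "\<dots> = 1 / card A + \<bar>c\<bar>"
    using K by (simp add: K_def sum.distrib A field_simps power2_eq_square)
  finally show ?thesis .
qed

lemma prob_deviation_tendsto_0_if_mean_square:
  fixes Y :: "nat \<Rightarrow> 'a \<Rightarrow> real" and q :: "nat \<Rightarrow> real"
  assumes meas: "\<And>n. Y n \<in> borel_measurable M"
    and int: "\<And>n. integrable M (\<lambda>\<omega>. (Y n \<omega> - q n)^2)"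
    and mean_square: "(\<lambda>n. expectation (\<lambda>\<omega>. (Y n \<omega> - q n)^2)) \<longlonglongrightarrow> 0"
    and q: "q \<longlonglongrightarrow> c" and \<eta>: "\<eta> > 0"
  shows "(\<lambda>n. prob {\<omega>\<in>space M. \<eta> < \<bar>Y n \<omega> - c\<bar>}) \<longlonglongrightarrow> 0"
proof (rule tendsto_sandwich[OF _ _ tendsto_const])
  have "\<forall>\<^sub>F n in sequentially. dist (q n) c < \<eta>/2"
    using q \<eta> by (intro tendstoD) simp_all
  then show "\<forall>\<^sub>F n in sequentially.
      prob {\<omega>\<in>space M. \<eta> < \<bar>Y n \<omega> - c\<bar>} \<le> expectation (\<lambda>\<omega>. (Y n \<omega> - q n)^2) / (\<eta>/2)^2"
  proof eventually_elim
    case (elim n)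
    have [measurable]: "Y n \<in> borel_measurable M" by (rule meas)
    have "\<eta>/2 \<le> \<bar>Y n \<omega> - q n\<bar>" if "\<eta> < \<bar>Y n \<omega> - c\<bar>" for \<omega>
      using that elim abs_triangle_ineq[of "Y n \<omega> - q n" "q n - c"] by (simp add: dist_real_def)
    then have "prob {\<omega>\<in>space M. \<eta> < \<bar>Y n \<omega> - c\<bar>} \<le> prob {\<omega>\<in>space M. \<eta>/2 \<le> \<bar>Y n \<omega> - q n\<bar>}"
      by (intro finite_measure_mono) auto
    also have "\<dots> \<le> expectation (\<lambda>\<omega>. (Y n \<omega> - q n)^2) / (\<eta>/2)^2"
      using int \<eta> by (intro second_moment_method) simp_all
    finally show ?case .
  qed
  show "(\<lambda>n. expectation (\<lambda>\<omega>. (Y n \<omega> - q n)^2) / (\<eta>/2)^2) \<longlonglongrightarrow> 0"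
    using tendsto_divide_zero[OF mean_square] .
qed (simp add: always_eventually)

lemma dTV_tendsto_in_prob_if_pointwise:
  fixes P :: "nat \<Rightarrow> 'a \<Rightarrow> nat \<Rightarrow> real" and p :: "nat \<Rightarrow> real"
  assumes P: "\<forall>\<^sub>F n in sequentially. \<forall>\<omega>. P n \<omega> sums 1 \<and> (\<forall>d. P n \<omega> d \<ge> 0)"
    and p: "p sums 1" "\<And>d. p d \<ge> 0"
    and meas: "\<And>n d. (\<lambda>\<omega>. P n \<omega> d) \<in> borel_measurable M"
    and pointwise: "\<And>d \<eta>. \<eta> > 0 \<Longrightarrow> (\<lambda>n. prob {\<omega>\<in>space M. \<eta> < \<bar>P n \<omega> d - p d\<bar>}) \<longlonglongrightarrow> 0"
    and \<epsilon>: "\<epsilon> > 0"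
  shows "(\<lambda>n. prob {\<omega>\<in>space M. \<epsilon> < dTV (P n \<omega>) p}) \<longlonglongrightarrow> 0"
proof -
  \<comment> \<open>Choose N with tail mass of p below \<epsilon>/4; then dTV > \<epsilon> forces a deviation
    above \<epsilon>/(2N) at some d < N.\<close>
  have "(\<lambda>N. \<Sum>d<N. p d) \<longlonglongrightarrow> 1" using p(1) by (simp add: sums_def)
  then have "\<forall>\<^sub>F N in sequentially. dist (\<Sum>d<N. p d) 1 < \<epsilon>/4"
    using \<epsilon> by (intro tendstoD) simp_all
  then obtain N0 where N0: "\<And>N. N \<ge> N0 \<Longrightarrow> dist (\<Sum>d<N. p d) 1 < \<epsilon>/4"
    unfolding eventually_sequentially by blast
  define N where "N = Suc N0"
  have tail: "1 - (\<Sum>d<N. p d) < \<epsilon>/4" using N0[of N] unfolding N_def dist_real_def by linarith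
  have N: "N > 0" by (simp add: N_def)
  define \<eta> where "\<eta> = \<epsilon> / (2 * real N)"
  have \<eta>: "\<eta> > 0" using \<epsilon> N by (simp add: \<eta>_def)
  define E where "E n d = {\<omega>\<in>space M. \<eta> < \<bar>P n \<omega> d - p d\<bar>}" for n d
  have E_sets: "E n d \<in> events" for n d
    using meas[of n d] unfolding E_def by measurable
  have cover: "{\<omega>\<in>space M. \<epsilon> < dTV (P n \<omega>) p} \<subseteq> (\<Union>d<N. E n d)"
    if "\<forall>\<omega>. P n \<omega> sums 1 \<and> (\<forall>d. P n \<omega> d \<ge> 0)" for n
  proof (rule subsetI, rule ccontr)
    fix \<omega> assume \<omega>: "\<omega> \<in> {\<omega>\<in>space M. \<epsilon> < dTV (P n \<omega>) p}" and "\<omega> \<notin> (\<Union>d<N. E n d)"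
    then have "\<bar>P n \<omega> d - p d\<bar> \<le> \<eta>" if "d < N" for d
      using that unfolding E_def by force
    then have "(\<Sum>d<N. \<bar>P n \<omega> d - p d\<bar>) \<le> real (card {..<N}) * \<eta>"
      by (intro sum_bounded_above) auto
    also have "\<dots> = \<epsilon>/2" using N by (simp add: \<eta>_def)
    finally have "(\<Sum>d<N. \<bar>P n \<omega> d - p d\<bar>) \<le> \<epsilon>/2" .
    moreover have "(\<Sum>d. \<bar>P n \<omega> d - p d\<bar>) \<le> 2 * (\<Sum>d<N. \<bar>P n \<omega> d - p d\<bar>) + 2 * (1 - (\<Sum>d<N. p d))"
      using that p by (intro suminf_abs_diff_le_initial_segment) auto
    ultimately show False using \<omega> tail \<epsilon> unfolding dTV_def by simp
  qed
  have bound: "\<forall>\<^sub>F n in sequentially. prob {\<omega>\<in>space M. \<epsilon> < dTV (P n \<omega>) p} \<le> (\<Sum>d<N. prob (E n d))"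
    using P
  proof eventually_elim
    case (elim n)
    have "prob {\<omega>\<in>space M. \<epsilon> < dTV (P n \<omega>) p} \<le> prob (\<Union>d<N. E n d)"
    proof (cases "{\<omega>\<in>space M. \<epsilon> < dTV (P n \<omega>) p} \<in> events")
      case True
      show ?thesis using cover[OF elim] E_sets by (intro finite_measure_mono) auto
    qed (simp add: measure_notin_sets)
    also have "\<dots> \<le> (\<Sum>d<N. prob (E n d))"
      using E_sets by (intro finite_measure_subadditive_finite) auto
    finally show ?case .
  qed
  have "(\<lambda>n. \<Sum>d<N. prob (E n d)) \<longlonglongrightarrow> 0"
    unfolding E_def using \<eta> by (intro tendsto_null_sum pointwise)
  from tendsto_sandwich[OF _ bound tendsto_const this] show ?thesis by simp
qed

end

lemma real_card_filter_eq_sum: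
  "finite A \<Longrightarrow> real (card {a\<in>A. P a}) = (\<Sum>a\<in>A. if P a then 1 else 0)"
  by (simp add: sum.If_cases Int_def)

lemma degree_le: "degree kn X n k \<omega> \<le> kn n"
proof -
  have "degree kn X n k \<omega> \<le> card {1..kn n}" unfolding degree_def by (rule card_mono) auto
  then show ?thesis by simp
qed

lemma emp_pmf_eq_sum:
  "emp_pmf kn X n \<omega> d = (\<Sum>k\<in>{1..kn n}. if degree kn X n k \<omega> = d then 1 else 0) / real (kn n)"
  unfolding emp_pmf_def by (subst real_card_filter_eq_sum) auto

lemma emp_pmf_nonneg: "emp_pmf kn X n \<omega> d \<ge> 0"
  unfolding emp_pmf_def by simp

lemma emp_pmf_le_1: "emp_pmf kn X n \<omega> d \<le> 1"
proof -
  have "card {k \<in> {1..kn n}. degree kn X n k \<omega> = d} \<le> card {1..kn n}" by (rule card_mono) auto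
  then show ?thesis unfolding emp_pmf_def by (cases "kn n = 0") (auto simp: divide_le_eq_1)
qed

lemma emp_pmf_sums_1:
  assumes "kn n > 0"
  shows "emp_pmf kn X n \<omega> sums 1"
proof -
  let ?A = "{1..kn n}"
  have vanish: "emp_pmf kn X n \<omega> d = 0" if "d \<notin> {..kn n}" for d
  proof -
    have "{k \<in> ?A. degree kn X n k \<omega> = d} = {}" using that degree_le[of kn X n _ \<omega>] by force
    then show ?thesis unfolding emp_pmf_def by simp
  qed
  have "(\<Sum>d\<in>{..kn n}. \<Sum>k\<in>{k \<in> ?A. degree kn X n k \<omega> = d}. (1::nat)) = (\<Sum>k\<in>?A. 1)"
    by (rule sum.group) (use degree_le in auto)
  then have partition: "(\<Sum>d\<in>{..kn n}. card {k \<in> ?A. degree kn X n k \<omega> = d}) = kn n" by simp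
  have "emp_pmf kn X n \<omega> sums (\<Sum>d\<in>{..kn n}. emp_pmf kn X n \<omega> d)"
    by (rule sums_finite) (use vanish in auto)
  also have "(\<Sum>d\<in>{..kn n}. emp_pmf kn X n \<omega> d) = 1"
    using assms unfolding emp_pmf_def sum_divide_distrib[symmetric] of_nat_sum[symmetric] partition
    by simp
  finally show ?thesis .
qed

context
  fixes M :: "'a measure" and X :: "nat \<Rightarrow> nat \<Rightarrow> nat \<Rightarrow> 'a \<Rightarrow> bool"
  assumes edges_measurable: "\<And>n k l. X n k l \<in> measurable M (count_space UNIV)"
begin

lemma measurable_degree: "degree kn X n k \<in> measurable M (count_space UNIV)"
proof -
  have [measurable]: "X n k l \<in> measurable M (count_space UNIV)" for l
    by (rule edges_measurable)
  have "(\<lambda>\<omega>. real (degree kn X n k \<omega>)) \<in> borel_measurable M"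
    unfolding degree_def by (subst real_card_filter_eq_sum) auto
  then have "{\<omega>\<in>space M. real (degree kn X n k \<omega>) = real a} \<in> sets M" for a
    by measurable
  then show ?thesis unfolding measurable_count_space_eq2_countable
    by (auto simp: Int_def conj_commute)
qed

lemma measurable_degree_pair:
  "(\<lambda>\<omega>. (degree kn X n k \<omega>, degree kn X n l \<omega>)) \<in> measurable M (count_space UNIV)"
proof -
  note [measurable] = measurable_degree[of kn n k] measurable_degree[of kn n l]
  have "{\<omega>\<in>space M. degree kn X n k \<omega> = a \<and> degree kn X n l \<omega> = b} \<in> sets M" for a b
    by measurable
  then show ?thesis unfolding measurable_count_space_eq2_countable
    by (auto simp: Int_def conj_commute vimage_def)
qed

lemma borel_measurable_emp_pmf: "(\<lambda>\<omega>. emp_pmf kn X n \<omega> d) \<in> borel_measurable M"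
proof -
  note [measurable] = measurable_degree
  show ?thesis unfolding emp_pmf_eq_sum by measurable
qed

end

context prob_space
begin

lemma emp_pmf_mean_square_le:
  fixes d :: nat
  assumes edges_measurable: "\<And>n k l. X n k l \<in> measurable M (count_space UNIV)"
    and two: "2 \<le> kn n"
    and same_law: "distr M (count_space UNIV) (degree kn X n 2) = distr M (count_space UNIV) (degree kn X n 1)"
    and same_pair_law: "\<And>k l. k \<in> {1..kn n} \<Longrightarrow> l \<in> {1..kn n} \<Longrightarrow> k \<noteq> l \<Longrightarrow>
           distr M (count_space UNIV) (\<lambda>\<omega>. (degree kn X n k \<omega>, degree kn X n l \<omega>))
         = distr M (count_space UNIV) (\<lambda>\<omega>. (degree kn X n 1 \<omega>, degree kn X n 2 \<omega>))"
  defines "I \<equiv> \<lambda>k \<omega>. if degree kn X n k \<omega> = d then 1 else (0::real)"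
  shows "expectation (\<lambda>\<omega>. (emp_pmf kn X n \<omega> d - expectation (I 1))^2)
      \<le> 1 / real (kn n) + \<bar>covariance M (I 1) (I 2)\<bar>"
proof -
  define h :: "nat \<Rightarrow> real" where "h a = (if a = d then 1 else 0)" for a
  define q where "q = expectation (I 1)"
  have degree_meas [measurable]: "degree kn X n k \<in> measurable M (count_space UNIV)" for k
    by (rule measurable_degree[OF edges_measurable])
  note pair_meas = measurable_degree_pair[OF edges_measurable]
  have I_meas: "I k \<in> borel_measurable M" for k
    unfolding I_def by measurable
  have "0 \<le> q" "q \<le> 1"
    unfolding q_def I_def by (auto intro!: integral_nonneg_AE integral_le_const integrable_const_bound[where B=1])
  then have bounded: "\<bar>I k \<omega> - q\<bar> \<le> 1" for k \<omega>
    by (auto simp: I_def abs_le_iff)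
  have "expectation (I 2) = q"
    using integral_eq_if_distr_eq[OF same_law degree_meas degree_meas, of h]
    by (simp add: q_def I_def h_def)
  then have cov: "covariance M (I 1) (I 2) = expectation (\<lambda>\<omega>. (I 1 \<omega> - q) * (I 2 \<omega> - q))"
    by (simp add: covariance_def q_def)
  have off_diag: "expectation (\<lambda>\<omega>. (I k \<omega> - q) * (I l \<omega> - q)) = covariance M (I 1) (I 2)"
    if "k \<in> {1..kn n}" "l \<in> {1..kn n}" "k \<noteq> l" for k l
    using integral_eq_if_distr_eq[OF same_pair_law[OF that] pair_meas pair_meas,
        of "\<lambda>(a, b). (h a - q) * (h b - q)"]
    unfolding cov by (simp add: I_def h_def)
  have "emp_pmf kn X n \<omega> d - q = (\<Sum>k\<in>{1..kn n}. I k \<omega> - q) / card {1..kn n}" for \<omega>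
    using two by (simp add: emp_pmf_eq_sum I_def sum_subtractf field_simps)
  then have "expectation (\<lambda>\<omega>. (emp_pmf kn X n \<omega> d - q)^2)
      = expectation (\<lambda>\<omega>. ((\<Sum>k\<in>{1..kn n}. I k \<omega> - q) / card {1..kn n})^2)"
    by simp
  also have "\<dots> \<le> 1 / card {1..kn n} + \<bar>covariance M (I 1) (I 2)\<bar>"
    using two bounded off_diag I_meas by (intro expectation_square_mean_le) auto
  finally show ?thesis by (simp add: q_def)
qed

lemma emp_pmf_tendsto_in_prob:
  fixes D :: "'a \<Rightarrow> nat" and d :: nat
  assumes edges_measurable: "\<And>n k l. X n k l \<in> measurable M (count_space UNIV)"
    and kn_ge2: "\<And>n. n \<ge> 2 \<Longrightarrow> kn n \<ge> 2"
    and kn_lim: "filterlim kn at_top sequentially"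
    and same_law: "\<And>n. n \<ge> 2 \<Longrightarrow>
           distr M (count_space UNIV) (degree kn X n 2) = distr M (count_space UNIV) (degree kn X n 1)"
    and same_pair_law: "\<And>n k l. n \<ge> 2 \<Longrightarrow> k \<in> {1..kn n} \<Longrightarrow> l \<in> {1..kn n} \<Longrightarrow> k \<noteq> l \<Longrightarrow>
           distr M (count_space UNIV) (\<lambda>\<omega>. (degree kn X n k \<omega>, degree kn X n l \<omega>))
         = distr M (count_space UNIV) (\<lambda>\<omega>. (degree kn X n 1 \<omega>, degree kn X n 2 \<omega>))"
    and D_meas: "D \<in> measurable M (count_space UNIV)"
    and weak_conv: "weak_conv_m (\<lambda>n. distr M borel (\<lambda>\<omega>. real (degree kn X n 1 \<omega>)))
                        (distr M borel (\<lambda>\<omega>. real (D \<omega>)))"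
    and cov_lim: "(\<lambda>n. covariance M (\<lambda>\<omega>. if degree kn X n 1 \<omega> = d then 1 else 0)
                                     (\<lambda>\<omega>. if degree kn X n 2 \<omega> = d then 1 else 0)) \<longlonglongrightarrow> 0"
    and \<eta>: "\<eta> > 0"
  shows "(\<lambda>n. prob {\<omega>\<in>space M. \<eta> < \<bar>emp_pmf kn X n \<omega> d - prob {\<omega>\<in>space M. D \<omega> = d}\<bar>}) \<longlonglongrightarrow> 0"
proof -
  define I where "I n k = (\<lambda>\<omega>. if degree kn X n k \<omega> = d then 1 else (0::real))" for n k
  define q where "q n = expectation (I n 1)" for n
  have degree_meas [measurable]: "degree kn X n k \<in> measurable M (count_space UNIV)" for n k
    by (rule measurable_degree[OF edges_measurable])
  have [measurable]: "(\<lambda>\<omega>. emp_pmf kn X n \<omega> d) \<in> borel_measurable M" for n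
    by (rule borel_measurable_emp_pmf[OF edges_measurable])
  have q_eq: "q n = prob {\<omega>\<in>space M. degree kn X n 1 \<omega> = d}" for n
  proof -
    have "q n = expectation (indicator {\<omega>\<in>space M. degree kn X n 1 \<omega> = d})"
      unfolding q_def I_def by (intro Bochner_Integration.integral_cong) (auto simp: indicator_def)
    then show ?thesis by simp
  qed
  have bounded: "\<bar>emp_pmf kn X n \<omega> d - q n\<bar> \<le> 1" for n \<omega>
    using emp_pmf_nonneg[of kn X n \<omega> d] emp_pmf_le_1[of kn X n \<omega> d]
      measure_nonneg[of M "{\<omega>\<in>space M. degree kn X n 1 \<omega> = d}"]
      prob_le_1[of "{\<omega>\<in>space M. degree kn X n 1 \<omega> = d}"]
    unfolding q_eq abs_le_iff by linarith
  then have square_bounded: "norm ((emp_pmf kn X n \<omega> d - q n)^2) \<le> 1" for n \<omega>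
    by (simp add: abs_square_le_1)
  have bound_lim: "(\<lambda>n. 1 / real (kn n) + \<bar>covariance M (I n 1) (I n 2)\<bar>) \<longlonglongrightarrow> 0"
  proof -
    have "filterlim (\<lambda>n. real (kn n)) at_top sequentially"
      by (rule filterlim_compose[OF filterlim_real_sequentially kn_lim])
    then have "(\<lambda>n. 1 / real (kn n)) \<longlonglongrightarrow> 0"
      by (simp add: divide_inverse tendsto_inverse_0_at_top)
    from tendsto_add[OF this tendsto_rabs[OF cov_lim]] show ?thesis by (simp add: I_def)
  qed
  have bound: "\<forall>\<^sub>F n in sequentially.
      expectation (\<lambda>\<omega>. (emp_pmf kn X n \<omega> d - q n)^2) \<le> 1 / real (kn n) + \<bar>covariance M (I n 1) (I n 2)\<bar>"
    using eventually_ge_at_top[of 2]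
  proof eventually_elim
    case (elim n)
    then have two: "2 \<le> kn n" by (rule kn_ge2)
    from emp_pmf_mean_square_le[OF edges_measurable two same_law[OF elim] same_pair_law[OF elim]]
    show ?case by (simp add: q_def I_def)
  qed
  have "\<forall>\<^sub>F n in sequentially. 0 \<le> expectation (\<lambda>\<omega>. (emp_pmf kn X n \<omega> d - q n)^2)"
    by (simp add: integral_nonneg_AE)
  from tendsto_sandwich[OF this bound tendsto_const bound_lim]
  have "(\<lambda>n. expectation (\<lambda>\<omega>. (emp_pmf kn X n \<omega> d - q n)^2)) \<longlonglongrightarrow> 0" .
  moreover have "q \<longlonglongrightarrow> prob {\<omega>\<in>space M. D \<omega> = d}"
    unfolding q_eq by (intro prob_eq_tendsto_if_weak_conv degree_meas D_meas weak_conv)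
  ultimately show ?thesis
    using square_bounded \<eta>
    by (intro prob_deviation_tendsto_0_if_mean_square integrable_const_bound[where B=1]) auto
qed

end

theorem proposition5:
  fixes M :: "'a measure"
    and kn :: "nat \<Rightarrow> nat"
    and X :: "nat \<Rightarrow> nat \<Rightarrow> nat \<Rightarrow> 'a \<Rightarrow> bool"
    and D :: "'a \<Rightarrow> nat"
    and p :: "nat \<Rightarrow> real"
  assumes "prob_space M"
    and meas_edges: "\<And>n k l. X n k l \<in> measurable M (count_space UNIV)"
    and kn_ge2: "\<And>n. n \<ge> 2 \<Longrightarrow> kn n \<ge> 2"
    and kn_lim: "filterlim kn at_top sequentially"
    and A1: "\<And>n k. n \<ge> 2 \<Longrightarrow> k \<in> {1..kn n} \<Longrightarrow>
           distr M (count_space UNIV) (degree kn X n k) = distr M (count_space UNIV) (degree kn X n 1)"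
    and A2: "\<And>n k l. n \<ge> 2 \<Longrightarrow> k \<in> {1..kn n} \<Longrightarrow> l \<in> {1..kn n} \<Longrightarrow> k \<noteq> l \<Longrightarrow>
           distr M (count_space UNIV) (\<lambda>\<omega>. (degree kn X n k \<omega>, degree kn X n l \<omega>))
         = distr M (count_space UNIV) (\<lambda>\<omega>. (degree kn X n 1 \<omega>, degree kn X n 2 \<omega>))"
    and D_meas: "D \<in> measurable M (count_space UNIV)"
    and p_pmf: "\<And>d. p d = measure M {\<omega> \<in> space M. D \<omega> = d}"
    and B: "weak_conv_m (\<lambda>n. distr M borel (\<lambda>\<omega>. real (degree kn X n 1 \<omega>)))
                        (distr M borel (\<lambda>\<omega>. real (D \<omega>)))"
    and C: "\<And>d. (\<lambda>n. covariance M (\<lambda>\<omega>. if degree kn X n 1 \<omega> = d then 1 else 0)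
                                     (\<lambda>\<omega>. if degree kn X n 2 \<omega> = d then 1 else 0))
                 \<longlonglongrightarrow> 0"
  shows "\<And>\<epsilon>. \<epsilon> > 0 \<Longrightarrow>
    (\<lambda>n. measure M {\<omega> \<in> space M. dTV (emp_pmf kn X n \<omega>) p > \<epsilon>}) \<longlonglongrightarrow> 0"
proof -
  fix \<epsilon> :: real assume "\<epsilon> > 0"
  interpret prob_space M by fact
  have p_eq: "p = (\<lambda>d. prob {\<omega>\<in>space M. D \<omega> = d})" using p_pmf by auto
  show "(\<lambda>n. measure M {\<omega> \<in> space M. dTV (emp_pmf kn X n \<omega>) p > \<epsilon>}) \<longlonglongrightarrow> 0"
  proof (rule dTV_tendsto_in_prob_if_pointwise)
    show "\<forall>\<^sub>F n in sequentially. \<forall>\<omega>. emp_pmf kn X n \<omega> sums 1 \<and> (\<forall>d. emp_pmf kn X n \<omega> d \<ge> 0)"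
      using eventually_ge_at_top[of 2]
    proof eventually_elim
      case (elim n)
      then have "kn n > 0" using kn_ge2[of n] by linarith
      then show ?case by (simp add: emp_pmf_sums_1 emp_pmf_nonneg)
    qed
    show "p sums 1" unfolding p_eq by (rule prob_eq_sums_1[OF D_meas])
    show "(\<lambda>\<omega>. emp_pmf kn X n \<omega> d) \<in> borel_measurable M" for n d
      by (rule borel_measurable_emp_pmf[OF meas_edges])
    have same_law: "distr M (count_space UNIV) (degree kn X n 2) = distr M (count_space UNIV) (degree kn X n 1)"
      if "n \<ge> 2" for n
      using that kn_ge2[OF that] by (intro A1) auto
    show "(\<lambda>n. prob {\<omega>\<in>space M. \<eta> < \<bar>emp_pmf kn X n \<omega> d - p d\<bar>}) \<longlonglongrightarrow> 0"
      if "\<eta> > 0" for d \<eta>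
      unfolding p_eq
      by (rule emp_pmf_tendsto_in_prob[OF meas_edges kn_ge2 kn_lim same_law A2 D_meas B C that])
  qed (use p_pmf \<open>\<epsilon> > 0\<close> in auto)
qed

end
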